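(* Let $n=ld$ with positive integers $l,d$, and let $k\geq 2$ be an integer. Let $A\in\mathbb{R}^{m\times n}$ be partitioned into blocks $A=[A[1],A[2],\dots,A[l]]$ with $A[i]\in\mathbb{R}^{m\times d}$, where each $A[i]$ is orthonormal, i.e. $(A[i])^TA[i]=I_d$. Let $\mu_B=\max_{1\leq i<j\leq l}\|(A[i])^TA[j]\|_2$ (spectral norm) and suppose $$\mu_B<\frac{1}{(2k-1)d}.$$ Let $\bm{x}\in\mathbb{R}^n$ be arbitrary, let $\epsilon\geq 0$, let $\bm{z}\in\mathbb{R}^m$ with $\|\bm{z}\|_2\leq\epsilon$, and set $\bm{b}=A\bm{x}+\bm{z}$. Let $\lambda>0$ and let $\bm{x}^{\sharp}$ be an optimal solution of $$\min_{\bm{y}\in\mathbb{R}^n}\ \|\bm{y}\|_{2,1}+\frac{1}{2\lambda}\|\bm{b}-A\bm{y}\|_2^2 .$$ Define $$\beta_1=\frac{\sqrt{1+(k-1)d\mu_B}}{1-(k-1)d\mu_B},\qquad \beta_2=\frac{\sqrt{k}\,d\mu_B}{1-(k-1)d\mu_B},$$ $$f_k(t)=kt^2+3\sqrt{k}\,t+3,\qquad g_k(t)=2kt^2+4\sqrt{k}\,t+1 .$$ Then $$\|A(\bm{x}^{\sharp}-\bm{x})\|_2\leq \frac{2\lambda}{\sqrt{k}\beta_1\lambda+\epsilon}\,\|\bm{x}-\bm{x}_{\{k\}}\|_{2,1}+2(\sqrt{k}\beta_1\lambda+\epsilon),$$ and $$\|\bm{x}^{\sharp}-\bm{x}\|_2\leq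 \frac{2\sqrt{k}\beta_1 f_k(\beta_2)\lambda+2g_k(\beta_2)\epsilon}{\sqrt{k}(1-\sqrt{k}\beta_2)(\sqrt{k}\beta_1\lambda+\epsilon)}\,\|\bm{x}-\bm{x}_{\{k\}}\|_{2,1}+\frac{\big(\sqrt{k}\beta_1(5+2\sqrt{k}\beta_2)\lambda+g_k(\beta_2)\epsilon\big)(\sqrt{k}\beta_1\lambda+\epsilon)}{\sqrt{k}(1-\sqrt{k}\beta_2)\lambda}.$$
   Context: Any $\bm{y}\in\mathbb{R}^n$ is partitioned into $l$ consecutive blocks $\bm{y}[i]=(\bm{y}_{(i-1)d+1},\dots,\bm{y}_{id})^T\in\mathbb{R}^d$, $i=1,\dots,l$, matching the column blocks $A[i]$ (columns $(i-1)d+1,\dots,id$ of $A$). $\|\bm{y}\|_{2,1}=\sum_{i=1}^l\|\bm{y}[i]\|_2$, and $\|\bm{y}\|_{2,0}$ is the number of indices $i$ with $\bm{y}[i]\neq 0$. $\bm{x}_{\{k\}}$ denotes a best $k$-block approximation of $\bm{x}$: $\bm{x}_{\{k\}}\in\arg\min_{\|\bm{y}\|_{2,0}\leq k}\|\bm{y}-\bm{x}\|_2$. *)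

theory Defs
  imports Complex_Main
begin

text \<open>Vectors in R^n are functions nat => real, only indices 0..<n matter.
  Matrices in R^(m x n) are functions nat => nat => real (row, column), indices 0-based.\<close>

definition vnorm :: "nat \<Rightarrow> (nat \<Rightarrow> real) \<Rightarrow> real" where
  "vnorm n x = sqrt (\<Sum>i<n. (x i)\<^sup>2)"

definition vblock :: "nat \<Rightarrow> (nat \<Rightarrow> real) \<Rightarrow> nat \<Rightarrow> (nat \<Rightarrow> real)" where
  "vblock d x i = (\<lambda>j. x (i * d + j))"

definition norm21 :: "nat \<Rightarrow> nat \<Rightarrow> (nat \<Rightarrow> real) \<Rightarrow> real" where
  "norm21 l d x = (\<Sum>i<l. vnorm d (vblock d x i))"

definition norm20 :: "nat \<Rightarrow> nat \<Rightarrow> (nat \<Rightarrow> real) \<Rightarrow> nat" where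
  "norm20 l d x = card {i. i < l \<and> (\<exists>j<d. vblock d x i j \<noteq> 0)}"

definition matvec :: "nat \<Rightarrow> (nat \<Rightarrow> nat \<Rightarrow> real) \<Rightarrow> (nat \<Rightarrow> real) \<Rightarrow> (nat \<Rightarrow> real)" where
  "matvec n A x = (\<lambda>r. \<Sum>c<n. A r c * x c)"

definition block_gram :: "nat \<Rightarrow> nat \<Rightarrow> (nat \<Rightarrow> nat \<Rightarrow> real) \<Rightarrow> nat \<Rightarrow> nat \<Rightarrow> (nat \<Rightarrow> nat \<Rightarrow> real)" where
  "block_gram m d A i j = (\<lambda>p q. \<Sum>r<m. A r (i * d + p) * A r (j * d + q))"

definition spec_norm :: "nat \<Rightarrow> (nat \<Rightarrow> nat \<Rightarrow> real) \<Rightarrow> real" where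
  "spec_norm d M = Sup {vnorm d (matvec d M v) | v. vnorm d v \<le> 1}"

text \<open>Block coherence mu_B = max over i<j of spectral norm of (A[i])^T A[j];
  set to 0 by convention if l = 1 (empty maximum).\<close>
definition block_coherence :: "nat \<Rightarrow> nat \<Rightarrow> nat \<Rightarrow> (nat \<Rightarrow> nat \<Rightarrow> real) \<Rightarrow> real" where
  "block_coherence m l d A =
     Max ({0} \<union> {spec_norm d (block_gram m d A i j) | i j. i < j \<and> j < l})"

definition is_best_block_approx ::
    "nat \<Rightarrow> nat \<Rightarrow> nat \<Rightarrow> (nat \<Rightarrow> real) \<Rightarrow> (nat \<Rightarrow> real) \<Rightarrow> bool" where
  "is_best_block_approx l d k x xk \<longleftrightarrow>
     norm20 l d xk \<le> k \<and>
     (\<forall>y. norm20 l d y \<le> k \<longrightarrow>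
          vnorm (l * d) (\<lambda>i. xk i - x i) \<le> vnorm (l * d) (\<lambda>i. y i - x i))"

end

theory Submission
  imports Defs "HOL-Analysis.L2_Norm"
begin

(* Write h = x# - x. Comparing the objective at x# with its value at x gives
   ||A h||^2 <= 2 eps ||A h|| + 2 lam (||x||_{2,1} - ||x#||_{2,1}), and splitting the blocks into
   the support T of x_{k} and its complement bounds the last difference by
   sqrt k ||h_T|| - ||h_{T^c}||_{2,1} + 2 ||x - x_{k}||_{2,1}.
   Orthonormal blocks of coherence at most delta make A nearly isometric on vectors with at most
   k nonzero blocks, whence ||h_S|| <= beta1 ||A h|| + beta2 ||h_{S^c}||_{2,1} for every such
   support S. Applying this to T and to the k largest blocks of h outside T, and bounding the
   remaining blocks R by the shelling estimate sqrt k ||h_R|| <= ||h_{T^c}||_{2,1}, reduces both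
   claims to inequalities between real numbers. The argument only needs delta >= mu_B; the
   theorem takes delta = d mu_B. *)

lemma vnorm_eq_L2_set: "vnorm n x = L2_set x {..<n}"
  by (simp add: vnorm_def L2_set_def)

lemma vnorm_nonneg [simp]: "0 \<le> vnorm n x"
  by (simp add: vnorm_eq_L2_set)

lemma vnorm_cong: "(\<And>i. i < n \<Longrightarrow> x i = y i) \<Longrightarrow> vnorm n x = vnorm n y"
  unfolding vnorm_eq_L2_set by (rule L2_set_cong) auto

lemma vnorm_add_le: "vnorm n (\<lambda>i. x i + y i) \<le> vnorm n x + vnorm n y"
  unfolding vnorm_eq_L2_set by (rule L2_set_triangle_ineq)

lemma vnorm_minus: "vnorm n (\<lambda>i. - x i) = vnorm n x"
  by (simp add: vnorm_def)

lemma vnorm_diff_le: "vnorm n (\<lambda>i. x i - y i) \<le> vnorm n x + vnorm n y"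
  using vnorm_add_le[of n x "\<lambda>i. - y i"] by (simp add: vnorm_minus)

lemma vnorm_le_add_vnorm_diff: "vnorm n x \<le> vnorm n y + vnorm n (\<lambda>i. y i - x i)"
  using vnorm_diff_le[of n y "\<lambda>i. y i - x i"] by simp

lemma abs_le_vnorm: "i < n \<Longrightarrow> \<bar>x i\<bar> \<le> vnorm n x"
  using member_le_L2_set[of "{..<n}" i "\<lambda>i. \<bar>x i\<bar>"] by (simp add: vnorm_eq_L2_set L2_set_def)

definition vinner :: "nat \<Rightarrow> (nat \<Rightarrow> real) \<Rightarrow> (nat \<Rightarrow> real) \<Rightarrow> real" where
  "vinner n x y = (\<Sum>i<n. x i * y i)"

lemma vinner_commute: "vinner n x y = vinner n y x"
  by (simp add: vinner_def mult.commute)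

lemma vinner_add_right: "vinner n x (\<lambda>i. y i + y' i) = vinner n x y + vinner n x y'"
  by (simp add: vinner_def distrib_left sum.distrib)

lemma vnorm_power2: "(vnorm n x)\<^sup>2 = vinner n x x"
  by (simp add: vnorm_def vinner_def power2_eq_square sum_nonneg)

lemma vnorm_diff_power2:
  "(vnorm n (\<lambda>i. x i - y i))\<^sup>2 = (vnorm n x)\<^sup>2 - 2 * vinner n x y + (vnorm n y)\<^sup>2"
  by (simp add: vnorm_power2 vinner_def algebra_simps sum_subtractf sum.distrib sum_distrib_left)

lemma abs_vinner_le_vnorm: "\<bar>vinner n x y\<bar> \<le> vnorm n x * vnorm n y"
proof -
  have "\<bar>vinner n x y\<bar> \<le> (\<Sum>i<n. \<bar>x i\<bar> * \<bar>y i\<bar>)"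
    unfolding vinner_def by (rule order_trans[OF sum_abs]) (simp add: abs_mult)
  also have "\<dots> \<le> vnorm n x * vnorm n y"
    unfolding vnorm_eq_L2_set by (rule L2_set_mult_ineq)
  finally show ?thesis .
qed

lemma sum_le_sqrt_mult_L2:
  assumes "card S \<le> k"
  shows "(\<Sum>i\<in>S. f i) \<le> sqrt k * sqrt (\<Sum>i\<in>S. (f i)\<^sup>2)"
proof -
  have "(\<Sum>i\<in>S. f i) \<le> (\<Sum>i\<in>S. \<bar>f i\<bar> * \<bar>1::real\<bar>)"
    by (rule sum_mono) simp
  also have "\<dots> \<le> L2_set f S * L2_set (\<lambda>_. 1) S"
    by (rule L2_set_mult_ineq)
  also have "\<dots> = sqrt (card S) * sqrt (\<Sum>i\<in>S. (f i)\<^sup>2)"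
    by (simp add: L2_set_constant L2_set_def)
  also have "\<dots> \<le> sqrt k * sqrt (\<Sum>i\<in>S. (f i)\<^sup>2)"
    using assms by (intro mult_right_mono) (auto simp: sum_nonneg)
  finally show ?thesis .
qed

lemma sum_lessThan_mult_blocks:
  fixes f :: "nat \<Rightarrow> 'a :: comm_monoid_add"
  shows "(\<Sum>c<l * d. f c) = (\<Sum>i<l. \<Sum>p<d. f (i * d + p))"
proof -
  have "(\<Sum>c<l * d. f c) = (\<Sum>i<l. sum f {i * d..<i * d + d})"
    using sum.nat_group[of f d l] by simp
  also have "\<dots> = (\<Sum>i<l. \<Sum>p<d. f (i * d + p))"
    by (rule sum.cong[OF refl], subst sum.atLeastLessThan_shift_0) (simp add: lessThan_atLeast0)
  finally show ?thesis .
qed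

lemma exists_max_sum_subset:
  fixes N :: "'a \<Rightarrow> real"
  assumes "finite C"
  obtains T where "T \<subseteq> C" "card T \<le> k" "\<And>S. S \<subseteq> C \<Longrightarrow> card S \<le> k \<Longrightarrow> sum N S \<le> sum N T"
proof -
  let ?F = "{S. S \<subseteq> C \<and> card S \<le> k}"
  have "finite ?F"
    using assms by (rule finite_subset[rotated, OF finite_Pow_iff[THEN iffD2]]) blast
  then have fin: "finite (sum N ` ?F)"
    by simp
  have "{} \<in> ?F"
    by simp
  then have "Max (sum N ` ?F) \<in> sum N ` ?F"
    using fin by (intro Max_in) auto
  then obtain T where T: "T \<subseteq> C" "card T \<le> k" and "sum N T = Max (sum N ` ?F)"
    by auto
  then have "sum N S \<le> sum N T" if "S \<subseteq> C" "card S \<le> k" for S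
    using fin that by (simp add: Max_ge)
  with T show ?thesis
    by (rule that)
qed

lemma max_sum_subset_dominates_outside:
  fixes N :: "'a \<Rightarrow> real"
  assumes fin: "finite C" and nonneg: "\<And>i. 0 \<le> N i"
    and T: "T \<subseteq> C" "card T \<le> k"
    and max: "\<And>S. S \<subseteq> C \<Longrightarrow> card S \<le> k \<Longrightarrow> sum N S \<le> sum N T"
    and j: "j \<in> C - T"
  shows "real k * N j \<le> sum N T"
proof -
  have finT: "finite T"
    using T fin finite_subset by blast
  show ?thesis
  proof (cases "card T < k")
    case True
    have "N j + sum N T = sum N (insert j T)"
      using finT j by simp
    also have "\<dots> \<le> sum N T"
      using finT j T True by (intro max) auto
    finally have "N j = 0"
      using nonneg[of j] by simp
    then show ?thesis
      by (simp add: sum_nonneg nonneg)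
  next
    case False
    have "N j \<le> N i" if i: "i \<in> T" for i
    proof -
      have "card T > 0"
        using finT i by (auto simp: card_gt_0_iff)
      then have "card (insert j (T - {i})) = card T"
        using finT i j by (simp add: card_insert_disjoint)
      then have "sum N (insert j (T - {i})) \<le> sum N T"
        using T i j by (intro max) auto
      moreover have "sum N (insert j (T - {i})) = N j + sum N T - N i"
        using finT i j by (simp add: sum_diff1)
      ultimately show ?thesis
        by simp
    qed
    then have "(\<Sum>i\<in>T. N j) \<le> sum N T"
      by (intro sum_mono)
    then show ?thesis
      using False T by simp
  qed
qed

lemma exists_subset_tail_sum_squares_le:
  fixes N :: "'a \<Rightarrow> real"
  assumes fin: "finite C" and nonneg: "\<And>i. 0 \<le> N i"
  obtains T where "T \<subseteq> C" "card T \<le> k" "real k * (\<Sum>i\<in>C - T. (N i)\<^sup>2) \<le> (sum N C)\<^sup>2"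
proof -
  obtain T where T: "T \<subseteq> C" "card T \<le> k"
    and max: "\<And>S. S \<subseteq> C \<Longrightarrow> card S \<le> k \<Longrightarrow> sum N S \<le> sum N T"
    using exists_max_sum_subset[OF fin] by blast
  have "real k * (\<Sum>i\<in>C - T. (N i)\<^sup>2) = (\<Sum>i\<in>C - T. N i * (real k * N i))"
    by (simp add: sum_distrib_left power2_eq_square mult_ac)
  also have "\<dots> \<le> (\<Sum>i\<in>C - T. N i * sum N T)"
    using max_sum_subset_dominates_outside[OF fin nonneg T max] nonneg
    by (intro sum_mono mult_left_mono) auto
  also have "\<dots> = sum N (C - T) * sum N T"
    by (simp add: sum_distrib_right)
  also have "\<dots> \<le> sum N C * sum N C"
    using fin T nonneg by (intro mult_mono sum_mono2 sum_nonneg) auto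
  finally show ?thesis
    using T by (intro that) (simp_all add: power2_eq_square)
qed

lemma matvec_diff: "matvec n A (\<lambda>i. x i - y i) r = matvec n A x r - matvec n A y r"
  by (simp add: matvec_def right_diff_distrib sum_subtractf)

lemma bdd_above_spec_norm_set: "bdd_above {vnorm d (matvec d M v) | v. vnorm d v \<le> 1}"
proof (rule bdd_aboveI[where M = "\<Sum>p<d. \<Sum>q<d. \<bar>M p q\<bar>"], clarify)
  fix v :: "nat \<Rightarrow> real"
  assume v: "vnorm d v \<le> 1"
  have entry: "\<bar>matvec d M v p\<bar> \<le> (\<Sum>q<d. \<bar>M p q\<bar>)" for p
  proof -
    have "\<bar>matvec d M v p\<bar> \<le> (\<Sum>q<d. \<bar>M p q\<bar> * \<bar>v q\<bar>)"
      unfolding matvec_def by (rule order_trans[OF sum_abs]) (simp add: abs_mult)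
    also have "\<dots> \<le> (\<Sum>q<d. \<bar>M p q\<bar>)"
      using order_trans[OF abs_le_vnorm v] by (intro sum_mono mult_left_le) auto
    finally show ?thesis .
  qed
  have "vnorm d (matvec d M v) \<le> (\<Sum>p<d. \<bar>matvec d M v p\<bar>)"
    unfolding vnorm_eq_L2_set by (rule L2_set_le_sum_abs)
  also have "\<dots> \<le> (\<Sum>p<d. \<Sum>q<d. \<bar>M p q\<bar>)"
    by (intro sum_mono entry)
  finally show "vnorm d (matvec d M v) \<le> (\<Sum>p<d. \<Sum>q<d. \<bar>M p q\<bar>)" .
qed

lemma vnorm_matvec_le_spec_norm: "vnorm d (matvec d M v) \<le> spec_norm d M * vnorm d v"
proof (cases "vnorm d v = 0")
  case True
  then have "matvec d M v = (\<lambda>p. 0)"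
    using abs_le_vnorm[of _ d v] by (auto simp: matvec_def)
  then show ?thesis
    using True by (simp add: vnorm_def)
next
  case False
  define c where "c = vnorm d v"
  have c: "c > 0"
    using False by (simp add: c_def order_less_le)
  have scale: "vnorm d (\<lambda>i. w i / c) = vnorm d w / c" for w
    using c by (simp add: vnorm_def power_divide real_sqrt_divide flip: sum_divide_distrib)
  have "vnorm d (\<lambda>q. v q / c) \<le> 1"
    using c unfolding scale by (simp add: c_def)
  then have "vnorm d (matvec d M (\<lambda>q. v q / c)) \<le> spec_norm d M"
    unfolding spec_norm_def by (intro cSup_upper[OF _ bdd_above_spec_norm_set]) blast
  moreover have "matvec d M (\<lambda>q. v q / c) = (\<lambda>p. matvec d M v p / c)"
    by (auto simp: matvec_def sum_divide_distrib)
  ultimately have "vnorm d (matvec d M v) / c \<le> spec_norm d M"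
    by (simp add: scale)
  then show ?thesis
    using c by (simp add: c_def pos_divide_le_eq mult.commute)
qed

(* block_apply d A i u is A[i] u, and block_sum d A h S is A h_S, where h_S keeps the blocks
   of h indexed by S and zeroes the others. *)
definition block_apply :: "nat \<Rightarrow> (nat \<Rightarrow> nat \<Rightarrow> real) \<Rightarrow> nat \<Rightarrow> (nat \<Rightarrow> real) \<Rightarrow> nat \<Rightarrow> real" where
  "block_apply d A i u = (\<lambda>r. \<Sum>p<d. A r (i * d + p) * u p)"

definition block_sum :: "nat \<Rightarrow> (nat \<Rightarrow> nat \<Rightarrow> real) \<Rightarrow> (nat \<Rightarrow> real) \<Rightarrow> nat set \<Rightarrow> nat \<Rightarrow> real" where
  "block_sum d A h S = (\<lambda>r. \<Sum>i\<in>S. block_apply d A i (vblock d h i) r)"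

definition block_norm :: "nat \<Rightarrow> (nat \<Rightarrow> real) \<Rightarrow> nat \<Rightarrow> real" where
  "block_norm d h i = vnorm d (vblock d h i)"

lemma block_norm_nonneg [simp]: "0 \<le> block_norm d h i"
  by (simp add: block_norm_def)

lemma matvec_eq_block_sum: "matvec (l * d) A h = block_sum d A h {..<l}"
  by (auto simp: matvec_def block_sum_def block_apply_def vblock_def sum_lessThan_mult_blocks)

lemma block_sum_split:
  assumes "S \<subseteq> {..<l}"
  shows "block_sum d A h {..<l} = (\<lambda>r. block_sum d A h S r + block_sum d A h ({..<l} - S) r)"
  using assms by (auto simp: block_sum_def sum.subset_diff[of S "{..<l}"])

lemma vnorm_eq_block_norms: "vnorm (l * d) h = sqrt (\<Sum>i<l. (block_norm d h i)\<^sup>2)"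
  by (simp add: vnorm_def block_norm_def vblock_def real_sqrt_pow2 sum_nonneg
      sum_lessThan_mult_blocks[of "\<lambda>c. (h c)\<^sup>2"])

lemma vnorm_le_three_block_parts:
  assumes "T \<subseteq> {..<l}" and "T' \<subseteq> {..<l} - T"
  shows "vnorm (l * d) h
           \<le> sqrt (\<Sum>i\<in>T. (block_norm d h i)\<^sup>2) + sqrt (\<Sum>i\<in>T'. (block_norm d h i)\<^sup>2)
             + sqrt (\<Sum>i\<in>{..<l} - T - T'. (block_norm d h i)\<^sup>2)"
proof -
  let ?Q = "\<lambda>S. \<Sum>i\<in>S. (block_norm d h i)\<^sup>2"
  have "(\<Sum>i<l. (block_norm d h i)\<^sup>2) = ?Q T + ?Q T' + ?Q ({..<l} - T - T')"
    using assms by (simp add: sum.subset_diff[of T "{..<l}"] sum.subset_diff[of T' "{..<l} - T"])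
  then have "vnorm (l * d) h = sqrt (?Q T + ?Q T' + ?Q ({..<l} - T - T'))"
    by (simp add: vnorm_eq_block_norms)
  also have "\<dots> \<le> sqrt (?Q T) + sqrt (?Q T') + sqrt (?Q ({..<l} - T - T'))"
    by (intro order_trans[OF sqrt_add_le_add_sqrt] add_right_mono sqrt_add_le_add_sqrt)
      (simp_all add: sum_nonneg)
  finally show ?thesis .
qed

lemma vinner_block_apply:
  "vinner m (block_apply d A i u) (block_apply d A j v) = vinner d u (matvec d (block_gram m d A i j) v)"
proof -
  have "vinner m (block_apply d A i u) (block_apply d A j v)
      = (\<Sum>r<m. \<Sum>p<d. \<Sum>q<d. A r (i * d + p) * u p * (A r (j * d + q) * v q))"
    by (simp add: vinner_def block_apply_def sum_product)
  also have "\<dots> = (\<Sum>p<d. \<Sum>q<d. \<Sum>r<m. A r (i * d + p) * u p * (A r (j * d + q) * v q))"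
    by (simp add: sum.swap[of _ "{..<m}"])
  also have "\<dots> = vinner d u (matvec d (block_gram m d A i j) v)"
    by (simp add: vinner_def matvec_def block_gram_def sum_distrib_left sum_distrib_right algebra_simps)
  finally show ?thesis .
qed

lemma vinner_block_sum:
  "vinner m (block_sum d A h S) (block_sum d A h S')
     = (\<Sum>i\<in>S. \<Sum>j\<in>S'. vinner m (block_apply d A i (vblock d h i)) (block_apply d A j (vblock d h j)))"
proof -
  have "vinner m (block_sum d A h S) (block_sum d A h S')
      = (\<Sum>r<m. \<Sum>i\<in>S. \<Sum>j\<in>S'. block_apply d A i (vblock d h i) r * block_apply d A j (vblock d h j) r)"
    by (simp add: vinner_def block_sum_def sum_product)
  also have "\<dots> = (\<Sum>i\<in>S. \<Sum>j\<in>S'. \<Sum>r<m. block_apply d A i (vblock d h i) r * block_apply d A j (vblock d h j) r)"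
    by (simp add: sum.swap[of _ "{..<m}"])
  finally show ?thesis
    by (simp add: vinner_def)
qed

lemma finite_block_coherence_set:
  "finite {spec_norm d (block_gram m d A i j) | i j. i < j \<and> j < l}"
proof -
  have "{spec_norm d (block_gram m d A i j) | i j. i < j \<and> j < l}
        \<subseteq> (\<lambda>(i, j). spec_norm d (block_gram m d A i j)) ` ({..<l} \<times> {..<l})"
    by auto
  then show ?thesis
    by (rule finite_subset) auto
qed

lemma block_coherence_nonneg: "0 \<le> block_coherence m l d A"
  unfolding block_coherence_def using finite_block_coherence_set by (intro Max_ge) auto

lemma spec_norm_block_gram_le_coherence:
  "i < j \<Longrightarrow> j < l \<Longrightarrow> spec_norm d (block_gram m d A i j) \<le> block_coherence m l d A"
  unfolding block_coherence_def using finite_block_coherence_set by (intro Max_ge) auto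

lemma lasso_basic_inequality:
  fixes R :: "(nat \<Rightarrow> real) \<Rightarrow> real"
  assumes opt: "R xs + 1 / (2 * lam) * (vnorm m (\<lambda>r. matvec n A x r + z r - matvec n A xs r))\<^sup>2
                  \<le> R x + 1 / (2 * lam) * (vnorm m (\<lambda>r. matvec n A x r + z r - matvec n A x r))\<^sup>2"
    and noise: "vnorm m z \<le> eps" and lam: "lam > 0"
  shows "(vnorm m (matvec n A (\<lambda>i. xs i - x i)))\<^sup>2
           \<le> 2 * eps * vnorm m (matvec n A (\<lambda>i. xs i - x i)) + 2 * lam * (R x - R xs)"
proof -
  define e where "e = matvec n A (\<lambda>i. xs i - x i)"
  have "(\<lambda>r. matvec n A x r + z r - matvec n A xs r) = (\<lambda>r. z r - e r)"
    by (auto simp: e_def matvec_diff)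
  then have "R xs + 1 / (2 * lam) * ((vnorm m z)\<^sup>2 - 2 * vinner m z e + (vnorm m e)\<^sup>2)
               \<le> R x + 1 / (2 * lam) * (vnorm m z)\<^sup>2"
    using opt by (simp add: vnorm_diff_power2)
  then have "2 * lam * (R xs + 1 / (2 * lam) * ((vnorm m z)\<^sup>2 - 2 * vinner m z e + (vnorm m e)\<^sup>2))
               \<le> 2 * lam * (R x + 1 / (2 * lam) * (vnorm m z)\<^sup>2)"
    using lam by (intro mult_left_mono) auto
  then have "(vnorm m e)\<^sup>2 \<le> 2 * vinner m z e + 2 * lam * (R x - R xs)"
    using lam by (simp add: algebra_simps)
  moreover have "vinner m z e \<le> eps * vnorm m e"
    using abs_vinner_le_vnorm[of m z e] noise mult_right_mono[OF noise vnorm_nonneg[of m e]]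
    by linarith
  ultimately show ?thesis
    unfolding e_def by linarith
qed

lemma norm21_diff_le:
  assumes T: "T \<subseteq> {..<l}"
    and outside: "\<And>i j. i < l \<Longrightarrow> i \<notin> T \<Longrightarrow> j < d \<Longrightarrow> vblock d xk i j = 0"
  shows "norm21 l d x - norm21 l d xs
           \<le> (\<Sum>i\<in>T. block_norm d (\<lambda>i. xs i - x i) i) - (\<Sum>i\<in>{..<l} - T. block_norm d (\<lambda>i. xs i - x i) i)
             + 2 * norm21 l d (\<lambda>i. x i - xk i)"
proof -
  let ?N = "block_norm d (\<lambda>i. xs i - x i)"
  let ?E = "block_norm d (\<lambda>i. x i - xk i)"
  let ?g = "\<lambda>i. block_norm d x i - block_norm d xs i"
  have inside: "?g i \<le> ?N i" for i
    using vnorm_le_add_vnorm_diff[of d "vblock d x i" "vblock d xs i"]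
    by (simp add: block_norm_def vblock_def)
  have off: "?g i \<le> 2 * ?E i - ?N i" if "i \<in> {..<l} - T" for i
  proof -
    have "block_norm d x i = ?E i"
      using outside that unfolding block_norm_def by (intro vnorm_cong) (simp add: vblock_def)
    moreover have "?N i \<le> block_norm d xs i + block_norm d x i"
      using vnorm_diff_le[of d "vblock d xs i" "vblock d x i"] by (simp add: block_norm_def vblock_def)
    ultimately show ?thesis
      by simp
  qed
  have "norm21 l d x - norm21 l d xs = (\<Sum>i\<in>T. ?g i) + (\<Sum>i\<in>{..<l} - T. ?g i)"
    using T by (simp add: norm21_def block_norm_def sum_subtractf sum.subset_diff[of T "{..<l}"])
  also have "\<dots> \<le> (\<Sum>i\<in>T. ?N i) + (\<Sum>i\<in>{..<l} - T. 2 * ?E i - ?N i)"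
    using inside off by (intro add_mono sum_mono) auto
  also have "\<dots> = (\<Sum>i\<in>T. ?N i) - (\<Sum>i\<in>{..<l} - T. ?N i) + 2 * (\<Sum>i\<in>{..<l} - T. ?E i)"
    by (simp add: sum_subtractf sum_distrib_left)
  also have "(\<Sum>i\<in>{..<l} - T. ?E i) \<le> norm21 l d (\<lambda>i. x i - xk i)"
    unfolding norm21_def block_norm_def[symmetric] by (intro sum_mono2) auto
  finally show ?thesis
    by simp
qed

lemma power2_le_linear_imp_le:
  fixes a s C :: real
  assumes "a\<^sup>2 \<le> 2 * s * a + C" and "0 \<le> C" and "0 < s"
  shows "a \<le> C / (2 * s) + 2 * s"
proof (rule ccontr)
  assume "\<not> ?thesis"
  then have a: "C / (2 * s) + 2 * s < a"
    by simp
  have C: "0 \<le> C / (2 * s)"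
    using assms(2,3) by simp
  have "C + 2 * s * a = C / (2 * s) * (2 * s) + 2 * s * a"
    using \<open>0 < s\<close> by simp
  also have "\<dots> \<le> C / (2 * s) * a + 2 * s * a"
    using a C by (intro add_right_mono mult_left_mono) auto
  also have "\<dots> = (C / (2 * s) + 2 * s) * a"
    by (simp add: algebra_simps)
  also have "\<dots> < a * a"
    using a C \<open>0 < s\<close> by (intro mult_strict_right_mono) auto
  finally show False
    using assms(1) by (simp add: power2_eq_square)
qed

(* In this lemma and the next, the left-hand side is what the argument produces; the paper's
   polynomials f_k and g_k only bound it from above. *)
lemma lasso_error_coefficient_le:
  fixes K b lam e c :: real
  assumes K: "K > 0" and b: "b > 0" and c: "0 \<le> c" "c < 1" and lam: "lam > 0" and e: "e \<ge> 0"
  defines "s \<equiv> K * b * lam + e"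
  shows "(2 + c) * b * (2 * lam / s) + (1 + c)\<^sup>2 / K * (4 * lam / (2 * lam * (1 - c)))
           \<le> (2 * K * b * (c\<^sup>2 + 3 * c + 3) * lam + 2 * (2 * c\<^sup>2 + 4 * c + 1) * e) / (K * (1 - c) * s)"
proof -
  have s: "s > 0"
    using K b lam e by (simp add: s_def add_pos_nonneg)
  have "(2 + c) * b * (2 * lam / s) + (1 + c)\<^sup>2 / K * (4 * lam / (2 * lam * (1 - c)))
      = (2 * K * b * lam * (3 + c) + 2 * (1 + c)\<^sup>2 * e) / (K * (1 - c) * s)"
    using K s c lam by (simp add: field_simps power2_eq_square) (simp add: s_def algebra_simps)
  also have "\<dots> \<le> (2 * K * b * (c\<^sup>2 + 3 * c + 3) * lam + 2 * (2 * c\<^sup>2 + 4 * c + 1) * e) / (K * (1 - c) * s)"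
  proof (rule divide_right_mono)
    have "K * b * lam * (3 + c) \<le> K * b * lam * (c\<^sup>2 + 3 * c + 3)"
      using K b lam c by (intro mult_left_mono) auto
    moreover have "(1 + c)\<^sup>2 * e \<le> (2 * c\<^sup>2 + 4 * c + 1) * e"
      using e c by (intro mult_right_mono) (auto simp: power2_eq_square algebra_simps)
    ultimately show "2 * K * b * lam * (3 + c) + 2 * (1 + c)\<^sup>2 * e
                       \<le> 2 * K * b * (c\<^sup>2 + 3 * c + 3) * lam + 2 * (2 * c\<^sup>2 + 4 * c + 1) * e"
      by (simp add: algebra_simps)
    show "0 \<le> K * (1 - c) * s"
      using K c s by simp
  qed
  finally show ?thesis .
qed

lemma lasso_error_constant_le:
  fixes K b lam e c :: real
  assumes K: "K > 0" and b: "b > 0" and c: "0 \<le> c" "c < 1" and lam: "lam > 0" and e: "e \<ge> 0"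
  defines "s \<equiv> K * b * lam + e"
  shows "(2 + c) * b * (2 * s) + (1 + c)\<^sup>2 / K * (s\<^sup>2 / (2 * lam * (1 - c)))
           \<le> (K * b * (5 + 2 * c) * lam + (2 * c\<^sup>2 + 4 * c + 1) * e) * s / (K * (1 - c) * lam)"
proof -
  have s: "s > 0"
    using K b lam e by (simp add: s_def add_pos_nonneg)
  have "(2 + c) * b * (2 * s) + (1 + c)\<^sup>2 / K * (s\<^sup>2 / (2 * lam * (1 - c)))
      = s * (K * b * lam * (4 * (2 + c) * (1 - c) + (1 + c)\<^sup>2) + (1 + c)\<^sup>2 * e) / (2 * K * (1 - c) * lam)"
    using K s c lam by (simp add: field_simps power2_eq_square) (simp add: s_def algebra_simps)
  also have "\<dots> \<le> s * (2 * K * b * (5 + 2 * c) * lam + 2 * (2 * c\<^sup>2 + 4 * c + 1) * e) / (2 * K * (1 - c) * lam)"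
  proof (rule divide_right_mono)
    have "K * b * lam * (4 * (2 + c) * (1 - c) + (1 + c)\<^sup>2) \<le> K * b * lam * (2 * (5 + 2 * c))"
      using K b lam c by (intro mult_left_mono) (auto simp: power2_eq_square algebra_simps)
    moreover have "(1 + c)\<^sup>2 * e \<le> 2 * (2 * c\<^sup>2 + 4 * c + 1) * e"
      using e c by (intro mult_right_mono) (auto simp: power2_eq_square algebra_simps)
    ultimately show "s * (K * b * lam * (4 * (2 + c) * (1 - c) + (1 + c)\<^sup>2) + (1 + c)\<^sup>2 * e)
                       \<le> s * (2 * K * b * (5 + 2 * c) * lam + 2 * (2 * c\<^sup>2 + 4 * c + 1) * e)"
      using s by (intro mult_left_mono) (auto simp: algebra_simps)
    show "0 \<le> 2 * K * (1 - c) * lam"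
      using K c lam by simp
  qed
  also have "\<dots> = (K * b * (5 + 2 * c) * lam + (2 * c\<^sup>2 + 4 * c + 1) * e) * s / (K * (1 - c) * lam)"
    using K c lam by (simp add: field_simps)
  finally show ?thesis .
qed

(* In the next three lemmas a = ||A h||, p = ||h_T||, q and r are the norms of h on the k largest
   blocks outside T and on the remaining blocks, t = ||h_{T^c}||_{2,1} and H = ||h||. *)
lemma lasso_residual_and_tail_le:
  fixes \<kappa> \<beta>1 \<beta>2 lam eps \<sigma> a t p :: real
  assumes \<kappa>: "\<kappa> > 0" and \<beta>1: "\<beta>1 > 0" and \<beta>2: "\<beta>2 \<ge> 0" "sqrt \<kappa> * \<beta>2 < 1"
    and lam: "lam > 0" and eps: "eps \<ge> 0" and \<sigma>: "\<sigma> \<ge> 0" and t: "t \<ge> 0"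
    and fidelity: "a\<^sup>2 \<le> 2 * eps * a + 2 * lam * (sqrt \<kappa> * p - t + 2 * \<sigma>)"
    and head: "p \<le> \<beta>1 * a + \<beta>2 * t"
  defines "s \<equiv> sqrt \<kappa> * \<beta>1 * lam + eps"
  shows "a \<le> 2 * lam / s * \<sigma> + 2 * s"
    and "t \<le> (s\<^sup>2 + 4 * lam * \<sigma>) / (2 * lam * (1 - sqrt \<kappa> * \<beta>2))"
proof -
  define c where "c = sqrt \<kappa> * \<beta>2"
  have s: "s > 0"
    using \<kappa> \<beta>1 lam eps by (simp add: s_def add_pos_nonneg)
  have "sqrt \<kappa> * p \<le> sqrt \<kappa> * \<beta>1 * a + c * t"
    using mult_left_mono[OF head, of "sqrt \<kappa>"] \<kappa> by (simp add: c_def algebra_simps)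
  then have quad: "a\<^sup>2 \<le> 2 * s * a - 2 * lam * (1 - c) * t + 4 * lam * \<sigma>"
    using fidelity lam mult_left_mono[of "sqrt \<kappa> * p" "sqrt \<kappa> * \<beta>1 * a + c * t" "2 * lam"]
    by (simp add: s_def algebra_simps)
  have "0 \<le> 2 * lam * (1 - c) * t"
    using lam \<beta>2 t by (simp add: c_def)
  then have "a\<^sup>2 \<le> 2 * s * a + 4 * lam * \<sigma>"
    using quad by linarith
  then have "a \<le> 4 * lam * \<sigma> / (2 * s) + 2 * s"
    by (rule power2_le_linear_imp_le) (use lam \<sigma> s in auto)
  then show "a \<le> 2 * lam / s * \<sigma> + 2 * s"
    by (simp add: mult_ac)
  have "2 * s * a - a\<^sup>2 \<le> s\<^sup>2"
    using zero_le_power2[of "s - a"] by (simp add: power2_diff)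
  then have "2 * lam * (1 - c) * t \<le> s\<^sup>2 + 4 * lam * \<sigma>"
    using quad by linarith
  then show "t \<le> (s\<^sup>2 + 4 * lam * \<sigma>) / (2 * lam * (1 - sqrt \<kappa> * \<beta>2))"
    using lam \<beta>2 by (simp add: c_def field_simps)
qed

lemma error_norm_le_head_and_tail:
  fixes \<kappa> \<beta>1 \<beta>2 a t p q r H :: real
  assumes \<kappa>: "\<kappa> > 0" and \<beta>2: "\<beta>2 \<ge> 0"
    and head: "p \<le> \<beta>1 * a + \<beta>2 * t"
    and second: "q \<le> \<beta>1 * a + \<beta>2 * (sqrt \<kappa> * p + t)"
    and split: "H \<le> p + q + r" and tail: "sqrt \<kappa> * r \<le> t"
  shows "H \<le> (2 + sqrt \<kappa> * \<beta>2) * \<beta>1 * a + (1 + sqrt \<kappa> * \<beta>2)\<^sup>2 / sqrt \<kappa> * t"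
proof -
  define c where "c = sqrt \<kappa> * \<beta>2"
  have "r \<le> t / sqrt \<kappa>"
    using tail \<kappa> by (simp add: field_simps)
  moreover have "q \<le> \<beta>1 * a + c * p + \<beta>2 * t"
    using second by (simp add: c_def algebra_simps)
  ultimately have "H \<le> (1 + c) * p + \<beta>1 * a + \<beta>2 * t + t / sqrt \<kappa>"
    using split by (simp add: algebra_simps)
  also have "\<dots> \<le> (1 + c) * (\<beta>1 * a + \<beta>2 * t) + \<beta>1 * a + \<beta>2 * t + t / sqrt \<kappa>"
    using head \<beta>2 \<kappa> by (intro add_right_mono mult_left_mono) (auto simp: c_def)
  also have "\<dots> = (2 + c) * \<beta>1 * a + (1 + c)\<^sup>2 / sqrt \<kappa> * t"
    using \<kappa> by (simp add: c_def field_simps power2_eq_square)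
  finally show ?thesis
    by (simp add: c_def)
qed

lemma lasso_error_estimate:
  fixes \<kappa> \<beta>1 \<beta>2 lam eps \<sigma> a t p q r H :: real
  assumes \<kappa>: "\<kappa> > 0" and \<beta>1: "\<beta>1 > 0" and \<beta>2: "\<beta>2 \<ge> 0" "sqrt \<kappa> * \<beta>2 < 1"
    and lam: "lam > 0" and eps: "eps \<ge> 0" and \<sigma>: "\<sigma> \<ge> 0" and a: "a \<ge> 0" and t: "t \<ge> 0"
    and fidelity: "a\<^sup>2 \<le> 2 * eps * a + 2 * lam * (sqrt \<kappa> * p - t + 2 * \<sigma>)"
    and head: "p \<le> \<beta>1 * a + \<beta>2 * t"
    and second: "q \<le> \<beta>1 * a + \<beta>2 * (sqrt \<kappa> * p + t)"
    and split: "H \<le> p + q + r" and tail: "sqrt \<kappa> * r \<le> t"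
  defines "s \<equiv> sqrt \<kappa> * \<beta>1 * lam + eps"
  shows "a \<le> 2 * lam / s * \<sigma> + 2 * s"
    and "H \<le> (2 * sqrt \<kappa> * \<beta>1 * (\<kappa> * \<beta>2\<^sup>2 + 3 * sqrt \<kappa> * \<beta>2 + 3) * lam
                + 2 * (2 * \<kappa> * \<beta>2\<^sup>2 + 4 * sqrt \<kappa> * \<beta>2 + 1) * eps)
               / (sqrt \<kappa> * (1 - sqrt \<kappa> * \<beta>2) * s) * \<sigma>
           + (sqrt \<kappa> * \<beta>1 * (5 + 2 * sqrt \<kappa> * \<beta>2) * lam + (2 * \<kappa> * \<beta>2\<^sup>2 + 4 * sqrt \<kappa> * \<beta>2 + 1) * eps) * s
               / (sqrt \<kappa> * (1 - sqrt \<kappa> * \<beta>2) * lam)"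
proof -
  note residual = lasso_residual_and_tail_le[OF \<kappa> \<beta>1 \<beta>2 lam eps \<sigma> t fidelity head, folded s_def]
  then show "a \<le> 2 * lam / s * \<sigma> + 2 * s"
    by simp
  define K where "K = sqrt \<kappa>"
  define c where "c = K * \<beta>2"
  have K: "K > 0" and c: "0 \<le> c" "c < 1"
    using \<kappa> \<beta>2 by (simp_all add: K_def c_def)
  have "H \<le> (2 + c) * \<beta>1 * a + (1 + c)\<^sup>2 / K * t"
    using error_norm_le_head_and_tail[OF \<kappa> \<beta>2(1) head second split tail] by (simp add: c_def K_def)
  also have "\<dots> \<le> (2 + c) * \<beta>1 * (2 * lam / s * \<sigma> + 2 * s)
                  + (1 + c)\<^sup>2 / K * ((s\<^sup>2 + 4 * lam * \<sigma>) / (2 * lam * (1 - c)))"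
    using residual K \<beta>1 c unfolding c_def K_def by (intro add_mono mult_left_mono) auto
  also have "\<dots> = ((2 + c) * \<beta>1 * (2 * lam / s) + (1 + c)\<^sup>2 / K * (4 * lam / (2 * lam * (1 - c)))) * \<sigma>
                  + ((2 + c) * \<beta>1 * (2 * s) + (1 + c)\<^sup>2 / K * (s\<^sup>2 / (2 * lam * (1 - c))))"
    by (simp add: algebra_simps add_divide_distrib)
  also have "\<dots> \<le> (2 * K * \<beta>1 * (c\<^sup>2 + 3 * c + 3) * lam + 2 * (2 * c\<^sup>2 + 4 * c + 1) * eps) / (K * (1 - c) * s) * \<sigma>
                  + (K * \<beta>1 * (5 + 2 * c) * lam + (2 * c\<^sup>2 + 4 * c + 1) * eps) * s / (K * (1 - c) * lam)"
    using lasso_error_coefficient_le[OF K \<beta>1 c lam eps] lasso_error_constant_le[OF K \<beta>1 c lam eps] \<sigma>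
    unfolding s_def K_def[symmetric] by (intro add_mono mult_right_mono) auto
  also have "c\<^sup>2 = \<kappa> * \<beta>2\<^sup>2"
    using \<kappa> by (simp add: c_def K_def power_mult_distrib)
  finally show "H \<le> (2 * sqrt \<kappa> * \<beta>1 * (\<kappa> * \<beta>2\<^sup>2 + 3 * sqrt \<kappa> * \<beta>2 + 3) * lam
                + 2 * (2 * \<kappa> * \<beta>2\<^sup>2 + 4 * sqrt \<kappa> * \<beta>2 + 1) * eps)
               / (sqrt \<kappa> * (1 - sqrt \<kappa> * \<beta>2) * s) * \<sigma>
           + (sqrt \<kappa> * \<beta>1 * (5 + 2 * sqrt \<kappa> * \<beta>2) * lam + (2 * \<kappa> * \<beta>2\<^sup>2 + 4 * sqrt \<kappa> * \<beta>2 + 1) * eps) * s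
               / (sqrt \<kappa> * (1 - sqrt \<kappa> * \<beta>2) * lam)"
    by (simp add: c_def K_def mult_ac)
qed

lemma incoherence_constants:
  fixes \<delta> :: real
  assumes "k \<ge> 1" and "0 \<le> \<delta>" and "(2 * real k - 1) * \<delta> < 1"
  shows "(real k - 1) * \<delta> < 1"
    and "0 < sqrt (1 + (real k - 1) * \<delta>) / (1 - (real k - 1) * \<delta>)"
    and "0 \<le> sqrt k * \<delta> / (1 - (real k - 1) * \<delta>)"
    and "sqrt k * (sqrt k * \<delta> / (1 - (real k - 1) * \<delta>)) < 1"
proof -
  have "0 \<le> (real k - 1) * \<delta>" and "(real k - 1) * \<delta> \<le> (2 * real k - 1) * \<delta>"
    using assms by (simp_all add: mult_right_mono)
  then have D: "0 < 1 - (real k - 1) * \<delta>" and "0 < 1 + (real k - 1) * \<delta>"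
    using assms(3) by linarith+
  then show "(real k - 1) * \<delta> < 1"
    and "0 < sqrt (1 + (real k - 1) * \<delta>) / (1 - (real k - 1) * \<delta>)"
    and "0 \<le> sqrt k * \<delta> / (1 - (real k - 1) * \<delta>)"
    using assms(2) by simp_all
  have "real k * \<delta> < 1 - (real k - 1) * \<delta>"
    using assms(3) by (simp add: algebra_simps)
  then show "sqrt k * (sqrt k * \<delta> / (1 - (real k - 1) * \<delta>)) < 1"
    using D by (simp add: mult.assoc[symmetric])
qed

locale incoherent_blocks =
  fixes m l d :: nat and A :: "nat \<Rightarrow> nat \<Rightarrow> real" and \<delta> :: real
  assumes orthonormal: "\<forall>i<l. \<forall>p<d. \<forall>q<d. block_gram m d A i i p q = (if p = q then 1 else 0)"
    and coherence_le: "block_coherence m l d A \<le> \<delta>"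
begin

lemma bound_nonneg: "0 \<le> \<delta>"
  using coherence_le block_coherence_nonneg[of m l d A] by linarith

lemma abs_vinner_block_apply_le:
  assumes "i < l" "j < l" "i \<noteq> j"
  shows "\<bar>vinner m (block_apply d A i u) (block_apply d A j v)\<bar> \<le> \<delta> * vnorm d u * vnorm d v"
proof -
  have less: "\<bar>vinner m (block_apply d A i u) (block_apply d A j v)\<bar> \<le> \<delta> * vnorm d u * vnorm d v"
    if "i < j" "j < l" for i j u v
  proof -
    have "\<bar>vinner m (block_apply d A i u) (block_apply d A j v)\<bar>
        \<le> vnorm d u * vnorm d (matvec d (block_gram m d A i j) v)"
      unfolding vinner_block_apply by (rule abs_vinner_le_vnorm)
    also have "\<dots> \<le> vnorm d u * (spec_norm d (block_gram m d A i j) * vnorm d v)"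
      by (intro mult_left_mono vnorm_matvec_le_spec_norm) simp
    also have "\<dots> \<le> vnorm d u * (\<delta> * vnorm d v)"
      using spec_norm_block_gram_le_coherence[OF that, of d m A] coherence_le
      by (intro mult_left_mono mult_right_mono) auto
    finally show ?thesis
      by (simp add: algebra_simps)
  qed
  show ?thesis
    using assms less[of i j u v] less[of j i v u] by (cases "i < j") (auto simp: vinner_commute mult_ac)
qed

lemma vinner_block_apply_self:
  assumes "i < l"
  shows "vinner m (block_apply d A i u) (block_apply d A i v) = vinner d u v"
proof -
  have "matvec d (block_gram m d A i i) v p = v p" if "p < d" for p
  proof -
    have "matvec d (block_gram m d A i i) v p = (\<Sum>c<d. if p = c then v c else 0)"
      unfolding matvec_def using orthonormal assms that by (intro sum.cong) auto
    then show ?thesis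
      using that by simp
  qed
  then show ?thesis
    unfolding vinner_block_apply by (simp add: vinner_def)
qed

lemma abs_vinner_block_sum_disjoint_le:
  assumes "S \<subseteq> {..<l}" "S' \<subseteq> {..<l}" "S \<inter> S' = {}"
  shows "\<bar>vinner m (block_sum d A h S) (block_sum d A h S')\<bar>
           \<le> \<delta> * (\<Sum>i\<in>S. block_norm d h i) * (\<Sum>j\<in>S'. block_norm d h j)"
proof -
  have "\<bar>vinner m (block_sum d A h S) (block_sum d A h S')\<bar>
      \<le> (\<Sum>i\<in>S. \<Sum>j\<in>S'. \<bar>vinner m (block_apply d A i (vblock d h i)) (block_apply d A j (vblock d h j))\<bar>)"
    unfolding vinner_block_sum by (intro order_trans[OF sum_abs] sum_mono sum_abs)
  also have "\<dots> \<le> (\<Sum>i\<in>S. \<Sum>j\<in>S'. \<delta> * block_norm d h i * block_norm d h j)"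
    unfolding block_norm_def using assms by (intro sum_mono abs_vinner_block_apply_le) auto
  also have "\<dots> = \<delta> * (\<Sum>i\<in>S. block_norm d h i) * (\<Sum>j\<in>S'. block_norm d h j)"
    by (simp add: sum_product sum_distrib_left mult_ac)
  finally show ?thesis .
qed

lemma abs_vnorm_block_sum_power2_diff_le:
  assumes S: "S \<subseteq> {..<l}"
  shows "\<bar>(vnorm m (block_sum d A h S))\<^sup>2 - (\<Sum>i\<in>S. (block_norm d h i)\<^sup>2)\<bar>
           \<le> \<delta> * ((\<Sum>i\<in>S. block_norm d h i)\<^sup>2 - (\<Sum>i\<in>S. (block_norm d h i)\<^sup>2))"
proof -
  have fin: "finite S"
    using S finite_subset by blast
  let ?g = "\<lambda>i j. vinner m (block_apply d A i (vblock d h i)) (block_apply d A j (vblock d h j))"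
  let ?N = "block_norm d h"
  have diagonal: "?g i i = (?N i)\<^sup>2" if "i \<in> S" for i
    using vinner_block_apply_self S that by (auto simp: vnorm_power2 block_norm_def)
  have "(vnorm m (block_sum d A h S))\<^sup>2 - (\<Sum>i\<in>S. (?N i)\<^sup>2) = (\<Sum>i\<in>S. \<Sum>j\<in>S - {i}. ?g i j)"
    using fin diagonal by (simp add: vnorm_power2 vinner_block_sum sum.remove sum.distrib)
  then have "\<bar>(vnorm m (block_sum d A h S))\<^sup>2 - (\<Sum>i\<in>S. (?N i)\<^sup>2)\<bar>
      \<le> (\<Sum>i\<in>S. \<Sum>j\<in>S - {i}. \<bar>?g i j\<bar>)"
    by (auto intro: order_trans[OF sum_abs] sum_mono sum_abs)
  also have "\<dots> \<le> (\<Sum>i\<in>S. \<Sum>j\<in>S - {i}. \<delta> * ?N i * ?N j)"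
    unfolding block_norm_def using S by (intro sum_mono abs_vinner_block_apply_le) auto
  also have "\<dots> = (\<Sum>i\<in>S. \<delta> * ?N i * ((\<Sum>j\<in>S. ?N j) - ?N i))"
    using fin by (simp add: sum_diff1 flip: sum_distrib_left)
  also have "\<dots> = \<delta> * ((\<Sum>i\<in>S. ?N i)\<^sup>2 - (\<Sum>i\<in>S. (?N i)\<^sup>2))"
    by (simp add: algebra_simps power2_eq_square sum_distrib_left sum_distrib_right
        sum_subtractf)
  finally show ?thesis .
qed

lemma block_sum_restricted_isometry:
  assumes S: "S \<subseteq> {..<l}" and card: "card S \<le> k"
  shows "(1 - (real k - 1) * \<delta>) * (\<Sum>i\<in>S. (block_norm d h i)\<^sup>2) \<le> (vnorm m (block_sum d A h S))\<^sup>2"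
    and "(vnorm m (block_sum d A h S))\<^sup>2 \<le> (1 + (real k - 1) * \<delta>) * (\<Sum>i\<in>S. (block_norm d h i)\<^sup>2)"
proof -
  let ?Q = "\<Sum>i\<in>S. (block_norm d h i)\<^sup>2"
  have "(\<Sum>i\<in>S. block_norm d h i)\<^sup>2 \<le> (sqrt k * sqrt ?Q)\<^sup>2"
    using card by (intro power_mono sum_le_sqrt_mult_L2 sum_nonneg) simp_all
  also have "\<dots> = real k * ?Q"
    by (simp add: power_mult_distrib sum_nonneg)
  finally have "\<delta> * ((\<Sum>i\<in>S. block_norm d h i)\<^sup>2 - ?Q) \<le> \<delta> * ((real k - 1) * ?Q)"
    using bound_nonneg by (intro mult_left_mono) (auto simp: algebra_simps)
  then show "(1 - (real k - 1) * \<delta>) * ?Q \<le> (vnorm m (block_sum d A h S))\<^sup>2"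
    and "(vnorm m (block_sum d A h S))\<^sup>2 \<le> (1 + (real k - 1) * \<delta>) * ?Q"
    using abs_vnorm_block_sum_power2_diff_le[OF S, of h] by (auto simp: algebra_simps abs_le_iff)
qed

lemma vnorm_block_sum_power2_le:
  assumes S: "S \<subseteq> {..<l}"
  shows "(vnorm m (block_sum d A h S))\<^sup>2
           \<le> vnorm m (block_sum d A h S) * vnorm m (matvec (l * d) A h)
             + \<delta> * (\<Sum>i\<in>S. block_norm d h i) * (\<Sum>i\<in>{..<l} - S. block_norm d h i)"
proof -
  let ?u = "block_sum d A h S"
  have "(vnorm m ?u)\<^sup>2 = vinner m ?u (matvec (l * d) A h) - vinner m ?u (block_sum d A h ({..<l} - S))"
    unfolding matvec_eq_block_sum block_sum_split[OF S, of d A h] vinner_add_right vnorm_power2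
    by simp
  then show ?thesis
    using abs_vinner_le_vnorm[of m ?u "matvec (l * d) A h", unfolded abs_le_iff]
      abs_vinner_block_sum_disjoint_le[OF S, of "{..<l} - S" h, unfolded abs_le_iff]
    by auto
qed

lemma restricted_block_norms_le:
  assumes S: "S \<subseteq> {..<l}" and card: "card S \<le> k" and "k > 0" and small: "(real k - 1) * \<delta> < 1"
  shows "sqrt (\<Sum>i\<in>S. (block_norm d h i)\<^sup>2)
           \<le> sqrt (1 + (real k - 1) * \<delta>) / (1 - (real k - 1) * \<delta>) * vnorm m (matvec (l * d) A h)
             + sqrt k * \<delta> / (1 - (real k - 1) * \<delta>) * (\<Sum>i\<in>{..<l} - S. block_norm d h i)"
proof -
  define D where "D = 1 - (real k - 1) * \<delta>"
  define R where "R = sqrt (1 + (real k - 1) * \<delta>)"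
  define p where "p = sqrt (\<Sum>i\<in>S. (block_norm d h i)\<^sup>2)"
  define t where "t = (\<Sum>i\<in>{..<l} - S. block_norm d h i)"
  define a where "a = vnorm m (matvec (l * d) A h)"
  define u where "u = vnorm m (block_sum d A h S)"
  have "0 \<le> (real k - 1) * \<delta>"
    using bound_nonneg \<open>k > 0\<close> by simp
  then have R: "R \<ge> 0"
    by (simp add: R_def)
  have p: "p\<^sup>2 = (\<Sum>i\<in>S. (block_norm d h i)\<^sup>2)" "p \<ge> 0"
    by (simp_all add: p_def sum_nonneg)
  have "u\<^sup>2 \<le> (R * p)\<^sup>2"
    using block_sum_restricted_isometry(2)[OF S card, of h] \<open>0 \<le> (real k - 1) * \<delta>\<close>
    by (simp add: R_def p power_mult_distrib u_def)
  then have u: "u \<le> R * p"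
    by (rule power2_le_imp_le) (simp add: R p)
  have "D * p\<^sup>2 \<le> u\<^sup>2"
    using block_sum_restricted_isometry(1)[OF S card, of h] by (simp add: D_def u_def p(1))
  also have "\<dots> \<le> u * a + \<delta> * (\<Sum>i\<in>S. block_norm d h i) * t"
    unfolding u_def a_def t_def by (rule vnorm_block_sum_power2_le[OF S])
  also have "\<dots> \<le> (R * p) * a + \<delta> * (sqrt k * p) * t"
    using u sum_le_sqrt_mult_L2[OF card, of "block_norm d h"] bound_nonneg
    by (intro add_mono mult_right_mono mult_left_mono) (auto simp: a_def t_def p_def sum_nonneg)
  finally have "D * p * p \<le> (R * a + \<delta> * sqrt k * t) * p"
    by (simp add: power2_eq_square algebra_simps)
  moreover have "0 \<le> R * a + \<delta> * sqrt k * t"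
    using bound_nonneg R by (simp add: a_def t_def sum_nonneg)
  ultimately have "D * p \<le> R * a + \<delta> * sqrt k * t"
    using p(2) by (cases "p = 0") (simp, metis mult_right_le_imp_le order_less_le)
  then have "p \<le> (R * a + \<delta> * sqrt k * t) / D"
    using small by (simp add: D_def pos_le_divide_eq mult.commute)
  also have "\<dots> = R / D * a + sqrt k * \<delta> / D * t"
    by (simp add: add_divide_distrib mult_ac)
  finally show ?thesis
    unfolding D_def R_def p_def t_def a_def .
qed

lemma block_error_decomposition:
  fixes h :: "nat \<Rightarrow> real"
  assumes T: "T \<subseteq> {..<l}" "card T \<le> k" and "k > 0" and small: "(real k - 1) * \<delta> < 1"
  defines "\<beta>1 \<equiv> sqrt (1 + (real k - 1) * \<delta>) / (1 - (real k - 1) * \<delta>)"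
    and "\<beta>2 \<equiv> sqrt k * \<delta> / (1 - (real k - 1) * \<delta>)"
    and "a \<equiv> vnorm m (matvec (l * d) A h)"
    and "t \<equiv> \<Sum>i\<in>{..<l} - T. block_norm d h i"
    and "p \<equiv> sqrt (\<Sum>i\<in>T. (block_norm d h i)\<^sup>2)"
  obtains q r where "p \<le> \<beta>1 * a + \<beta>2 * t" and "q \<le> \<beta>1 * a + \<beta>2 * (sqrt k * p + t)"
    and "vnorm (l * d) h \<le> p + q + r" and "sqrt k * r \<le> t"
proof -
  let ?N = "block_norm d h"
  let ?C = "{..<l} - T"
  obtain T' where T': "T' \<subseteq> ?C" "card T' \<le> k" and tail: "real k * (\<Sum>i\<in>?C - T'. (?N i)\<^sup>2) \<le> t\<^sup>2"
    using exists_subset_tail_sum_squares_le[of ?C ?N k] unfolding t_def by auto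
  define q where "q = sqrt (\<Sum>i\<in>T'. (?N i)\<^sup>2)"
  define r where "r = sqrt (\<Sum>i\<in>?C - T'. (?N i)\<^sup>2)"
  have \<beta>2: "\<beta>2 \<ge> 0"
    using bound_nonneg small by (simp add: \<beta>2_def)
  have "p \<le> \<beta>1 * a + \<beta>2 * t"
    using restricted_block_norms_le[OF T \<open>k > 0\<close> small]
    by (simp add: \<beta>1_def \<beta>2_def a_def t_def p_def)
  moreover have "q \<le> \<beta>1 * a + \<beta>2 * (sqrt k * p + t)"
  proof -
    have "(\<Sum>i\<in>{..<l} - T'. ?N i) \<le> (\<Sum>i<l. ?N i)"
      by (intro sum_mono2) auto
    also have "\<dots> = (\<Sum>i\<in>T. ?N i) + t"
      using T by (simp add: t_def sum.subset_diff[of T "{..<l}"])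
    also have "\<dots> \<le> sqrt k * p + t"
      using sum_le_sqrt_mult_L2[OF T(2)] by (simp add: p_def)
    finally have "\<beta>2 * (\<Sum>i\<in>{..<l} - T'. ?N i) \<le> \<beta>2 * (sqrt k * p + t)"
      using \<beta>2 by (rule mult_left_mono)
    moreover have "q \<le> \<beta>1 * a + \<beta>2 * (\<Sum>i\<in>{..<l} - T'. ?N i)"
      using restricted_block_norms_le[of T' k h] T' \<open>k > 0\<close> small
      by (auto simp: \<beta>1_def \<beta>2_def a_def q_def)
    ultimately show ?thesis
      by linarith
  qed
  moreover have "vnorm (l * d) h \<le> p + q + r"
    unfolding p_def q_def r_def using T(1) T'(1) by (rule vnorm_le_three_block_parts)
  moreover have "sqrt k * r \<le> t"
  proof (rule power2_le_imp_le)
    show "(sqrt k * r)\<^sup>2 \<le> t\<^sup>2"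
      using tail by (simp add: r_def power_mult_distrib sum_nonneg)
    show "0 \<le> t"
      by (simp add: t_def sum_nonneg)
  qed
  ultimately show ?thesis
    by (rule that)
qed

theorem block_lasso_error_bounds:
  fixes x xs xk z :: "nat \<Rightarrow> real" and k :: nat and eps lam :: real
  assumes "k \<ge> 1" and small: "(2 * real k - 1) * \<delta> < 1"
    and "eps \<ge> 0" and noise: "vnorm m z \<le> eps" and "lam > 0"
    and opt: "norm21 l d xs
                + 1 / (2 * lam) * (vnorm m (\<lambda>r. matvec (l * d) A x r + z r - matvec (l * d) A xs r))\<^sup>2
              \<le> norm21 l d x
                + 1 / (2 * lam) * (vnorm m (\<lambda>r. matvec (l * d) A x r + z r - matvec (l * d) A x r))\<^sup>2"
    and best: "is_best_block_approx l d k x xk"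
  defines "\<beta>1 \<equiv> sqrt (1 + (real k - 1) * \<delta>) / (1 - (real k - 1) * \<delta>)"
    and "\<beta>2 \<equiv> sqrt k * \<delta> / (1 - (real k - 1) * \<delta>)"
    and "\<sigma> \<equiv> norm21 l d (\<lambda>i. x i - xk i)"
    and "s \<equiv> sqrt k * (sqrt (1 + (real k - 1) * \<delta>) / (1 - (real k - 1) * \<delta>)) * lam + eps"
  shows "vnorm m (matvec (l * d) A (\<lambda>i. xs i - x i)) \<le> 2 * lam / s * \<sigma> + 2 * s" (is ?residual_bound)
    and "vnorm (l * d) (\<lambda>i. xs i - x i)
           \<le> (2 * sqrt k * \<beta>1 * (real k * \<beta>2\<^sup>2 + 3 * sqrt k * \<beta>2 + 3) * lam
                + 2 * (2 * real k * \<beta>2\<^sup>2 + 4 * sqrt k * \<beta>2 + 1) * eps)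
               / (sqrt k * (1 - sqrt k * \<beta>2) * s) * \<sigma>
             + (sqrt k * \<beta>1 * (5 + 2 * sqrt k * \<beta>2) * lam + (2 * real k * \<beta>2\<^sup>2 + 4 * sqrt k * \<beta>2 + 1) * eps) * s
               / (sqrt k * (1 - sqrt k * \<beta>2) * lam)" (is ?error_bound)
proof -
  note constants = incoherence_constants[OF \<open>k \<ge> 1\<close> bound_nonneg small, folded \<beta>1_def \<beta>2_def]
  define h where "h = (\<lambda>i. xs i - x i)"
  define T where "T = {i. i < l \<and> (\<exists>j<d. vblock d xk i j \<noteq> 0)}"
  have T: "T \<subseteq> {..<l}" "card T \<le> k"
    using best by (auto simp: T_def is_best_block_approx_def norm20_def)
  define a where "a = vnorm m (matvec (l * d) A h)"
  define t where "t = (\<Sum>i\<in>{..<l} - T. block_norm d h i)"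
  define p where "p = sqrt (\<Sum>i\<in>T. (block_norm d h i)\<^sup>2)"
  obtain q r where head: "p \<le> \<beta>1 * a + \<beta>2 * t" and second: "q \<le> \<beta>1 * a + \<beta>2 * (sqrt k * p + t)"
    and split: "vnorm (l * d) h \<le> p + q + r" and tail: "sqrt k * r \<le> t"
    using block_error_decomposition[OF T _ constants(1), of h] \<open>k \<ge> 1\<close>
    unfolding \<beta>1_def \<beta>2_def a_def t_def p_def by auto
  have "norm21 l d x - norm21 l d xs \<le> sqrt k * p - t + 2 * \<sigma>"
    using norm21_diff_le[OF T(1), of d xk x xs] sum_le_sqrt_mult_L2[OF T(2), of "block_norm d h"]
    unfolding p_def t_def \<sigma>_def h_def by (fastforce simp: T_def)
  then have "2 * lam * (norm21 l d x - norm21 l d xs) \<le> 2 * lam * (sqrt k * p - t + 2 * \<sigma>)"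
    using \<open>lam > 0\<close> by (intro mult_left_mono) auto
  then have fidelity: "a\<^sup>2 \<le> 2 * eps * a + 2 * lam * (sqrt k * p - t + 2 * \<sigma>)"
    using lasso_basic_inequality[OF opt noise \<open>lam > 0\<close>] unfolding a_def h_def by linarith
  have "a \<ge> 0" "t \<ge> 0" "\<sigma> \<ge> 0" "real k > 0"
    using \<open>k \<ge> 1\<close> by (simp_all add: a_def t_def \<sigma>_def norm21_def sum_nonneg)
  have "s = sqrt k * \<beta>1 * lam + eps"
    by (simp add: s_def \<beta>1_def)
  from lasso_error_estimate[OF \<open>real k > 0\<close> constants(2-4) \<open>lam > 0\<close> \<open>eps \<ge> 0\<close>
      \<open>\<sigma> \<ge> 0\<close> \<open>a \<ge> 0\<close> \<open>t \<ge> 0\<close> fidelity head second split tail, folded this]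
  show ?residual_bound and ?error_bound
    unfolding a_def h_def .
qed

end

theorem theorem3:
  fixes m l d k :: nat
    and A :: "nat \<Rightarrow> nat \<Rightarrow> real"
    and x z xs xk :: "nat \<Rightarrow> real"
    and eps lam :: real
  assumes "l > 0" and "d > 0" and "k \<ge> 2"
    and orth: "\<forall>i<l. \<forall>p<d. \<forall>q<d. block_gram m d A i i p q = (if p = q then 1 else 0)"
    and coh: "block_coherence m l d A < 1 / ((2 * real k - 1) * real d)"
    and "eps \<ge> 0" and "vnorm m z \<le> eps"
    and "lam > 0"
    and opt: "\<forall>y. norm21 l d xs
                   + 1 / (2 * lam) * (vnorm m (\<lambda>r. matvec (l * d) A x r + z r - matvec (l * d) A xs r))\<^sup>2
                 \<le> norm21 l d y
                   + 1 / (2 * lam) * (vnorm m (\<lambda>r. matvec (l * d) A x r + z r - matvec (l * d) A y r))\<^sup>2"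
    and best: "is_best_block_approx l d k x xk"
  shows
    "let \<mu> = block_coherence m l d A;
         \<beta>1 = sqrt (1 + (real k - 1) * real d * \<mu>) / (1 - (real k - 1) * real d * \<mu>);
         \<beta>2 = sqrt (real k) * real d * \<mu> / (1 - (real k - 1) * real d * \<mu>);
         f = (\<lambda>t. real k * t\<^sup>2 + 3 * sqrt (real k) * t + 3);
         g = (\<lambda>t. 2 * real k * t\<^sup>2 + 4 * sqrt (real k) * t + 1);
         \<sigma> = norm21 l d (\<lambda>i. x i - xk i);
         s = sqrt (real k) * \<beta>1 * lam + eps
     in vnorm m (matvec (l * d) A (\<lambda>i. xs i - x i))
          \<le> 2 * lam / s * \<sigma> + 2 * s
      \<and> vnorm (l * d) (\<lambda>i. xs i - x i)
          \<le> (2 * sqrt (real k) * \<beta>1 * f \<beta>2 * lam + 2 * g \<beta>2 * eps)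
               / (sqrt (real k) * (1 - sqrt (real k) * \<beta>2) * s) * \<sigma>
            + (sqrt (real k) * \<beta>1 * (5 + 2 * sqrt (real k) * \<beta>2) * lam + g \<beta>2 * eps) * s
               / (sqrt (real k) * (1 - sqrt (real k) * \<beta>2) * lam)"
proof -
  define \<mu> where "\<mu> = block_coherence m l d A"
  have "0 \<le> \<mu>"
    by (simp add: \<mu>_def block_coherence_nonneg)
  then have "\<mu> \<le> real d * \<mu>"
    using \<open>d > 0\<close> mult_right_mono[of 1 "real d" \<mu>] by simp
  then interpret incoherent_blocks m l d A "real d * \<mu>"
    using orth by unfold_locales (simp_all add: \<mu>_def)
  have small: "(2 * real k - 1) * (real d * \<mu>) < 1"
    using coh \<open>d > 0\<close> \<open>k \<ge> 2\<close> by (simp add: \<mu>_def pos_less_divide_eq mult_ac)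
  have "k \<ge> 1"
    using \<open>k \<ge> 2\<close> by simp
  note bounds = block_lasso_error_bounds[OF \<open>k \<ge> 1\<close> small \<open>eps \<ge> 0\<close> \<open>vnorm m z \<le> eps\<close>
      \<open>lam > 0\<close> opt[rule_format, of x] best]
  have assoc: "(real k - 1) * real d * \<mu> = (real k - 1) * (real d * \<mu>)"
    "sqrt k * real d * \<mu> = sqrt k * (real d * \<mu>)"
    by (simp_all add: mult.assoc)
  show ?thesis
    unfolding Let_def \<mu>_def[symmetric] assoc using bounds by (rule conjI)
qed

end
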